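(* Fix $n\ge2$ and $1\le m\le n$. Consider the following game. Alice chooses $\epsilon_0>0$ and Bob chooses an $n\times n$ $(m,\epsilon_0)$-matrix $A_0$; then Alice chooses $\epsilon_1>0$ (knowing $A_0$) and Bob chooses an $n\times n$ $(m,\epsilon_1)$-matrix $A_1$; and so on inductively, producing $(A_s)_{s\ge0}$. Let $A_{r,s}=A_rA_{r+1}\cdots A_s$ for $r<s$. Alice wins if there exist $\bar\epsilon_r>0$ ($r\ge0$) such that for every $r\ge0$ and every $s>r$, $A_{r,s}$ is an $(m,\bar\epsilon_r)$-matrix, and $\bar\epsilon_r\to0$ as $r\to\infty$; otherwise Bob wins. Then Alice has a winning strategy.
   Context: For $\epsilon>0$ and $1\le m\le n$, an $n\times n$ nonnegative matrix $A=(a_{ij})$ with positive diagonal entries is an $(m,\epsilon)$-matrix if $a_{ij}/a_{jj}<\epsilon$ for all $j\le m$ and $i\ne j$. *)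

theory Defs
  imports Complex_Main
begin

(* n x n real matrices represented as functions nat => nat => real; only entries
   with indices in {0..<n} are meaningful (indices are 0-based, so the paper's
   columns j = 1..m become j = 0..<m). *)
type_synonym mat = "nat \<Rightarrow> nat \<Rightarrow> real"

definition mat_mult :: "nat \<Rightarrow> mat \<Rightarrow> mat \<Rightarrow> mat" where
  "mat_mult n A B = (\<lambda>i j. \<Sum>k<n. A i k * B k j)"

definition is_meps :: "nat \<Rightarrow> nat \<Rightarrow> real \<Rightarrow> mat \<Rightarrow> bool" where
  "is_meps n m eps A \<longleftrightarrow>
     (\<forall>i<n. \<forall>j<n. 0 \<le> A i j) \<and>
     (\<forall>j<n. 0 < A j j) \<and>
     (\<forall>j<m. \<forall>i<n. i \<noteq> j \<longrightarrow> A i j / A j j < eps)"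

fun prodm :: "nat \<Rightarrow> (nat \<Rightarrow> mat) \<Rightarrow> nat \<Rightarrow> nat \<Rightarrow> mat" where
  "prodm n A r 0 = A r"
| "prodm n A r (Suc s) =
     (if Suc s \<le> r then A r else mat_mult n (prodm n A r s) (A (Suc s)))"

definition alice_wins :: "nat \<Rightarrow> nat \<Rightarrow> (nat \<Rightarrow> mat) \<Rightarrow> bool" where
  "alice_wins n m A \<longleftrightarrow>
     (\<exists>eb :: nat \<Rightarrow> real. (\<forall>r. 0 < eb r) \<and>
        (\<forall>r s. r < s \<longrightarrow> is_meps n m (eb r) (prodm n A r s)) \<and>
        eb \<longlonglongrightarrow> 0)"

end

theory Submission
  imports Defs
begin

text \<open>Alice plays \<open>\<epsilon>\<^sub>s = 2\<^sup>-\<^sup>s / (1 + M\<^sub>s)\<close>, where \<open>M\<^sub>s\<close> bounds every ratio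
  \<open>(\<Sum>\<^sub>k P\<^sub>i\<^sub>k) / P\<^sub>j\<^sub>j\<close> of the products \<open>P = A\<^sub>r\<^sub>,\<^sub>s\<^sub>-\<^sub>1\<close> already played.
  For nonnegative matrices with positive diagonal, appending a factor \<open>B\<close> whose column
  ratios are below \<open>\<delta>\<close> raises the column ratios of \<open>P\<close> by at most \<open>\<delta>\<close> times that
  row-sum ratio, i.e. by at most \<open>2\<^sup>-\<^sup>s\<close>. Hence \<open>A\<^sub>r\<^sub>,\<^sub>s\<close> is an
  \<open>(m, 2\<^sup>1\<^sup>-\<^sup>r)\<close>-matrix for all \<open>s > r\<close>.\<close>

lemma prodm_cong:
  assumes "\<forall>t\<le>max r s. A t = B t"
  shows "prodm n A r s = prodm n B r s"
  using assms by (induction s) (simp_all add: mat_mult_def)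

lemma prodm_same [simp]: "prodm n A r r = A r"
  by (cases r) auto

lemma is_meps_mono: "is_meps n m e A \<Longrightarrow> e \<le> e' \<Longrightarrow> is_meps n m e' A"
  unfolding is_meps_def by force

lemma mat_mult_nonneg:
  assumes "\<forall>i<n. \<forall>k<n. 0 \<le> P i k" "\<forall>k<n. \<forall>j<n. 0 \<le> B k j" "i < n" "j < n"
  shows "0 \<le> mat_mult n P B i j"
  unfolding mat_mult_def using assms by (intro sum_nonneg) auto

lemma mat_mult_diag_ge:
  assumes "\<forall>i<n. \<forall>k<n. 0 \<le> P i k" "\<forall>k<n. \<forall>j<n. 0 \<le> B k j" "j < n"
  shows "P j j * B j j \<le> mat_mult n P B j j"
  unfolding mat_mult_def using assms
  by (intro member_le_sum[where f = "\<lambda>k. P j k * B k j"]) auto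

lemma mat_mult_diag_pos:
  assumes "\<forall>i<n. \<forall>k<n. 0 \<le> P i k" "\<forall>k<n. \<forall>j<n. 0 \<le> B k j" "j < n"
    and "0 < P j j" "0 < B j j"
  shows "0 < mat_mult n P B j j"
  using mat_mult_diag_ge[OF assms(1-3)] mult_pos_pos[OF assms(4,5)] by linarith

definition row_diag_ratio :: "nat \<Rightarrow> mat \<Rightarrow> nat \<Rightarrow> nat \<Rightarrow> real" where
  "row_diag_ratio n P i j = (\<Sum>k<n. P i k) / P j j"

lemma mat_mult_column_ratio_le:
  assumes P: "\<forall>i<n. \<forall>k<n. 0 \<le> P i k" "0 < P j j"
    and B: "\<forall>k<n. \<forall>j<n. 0 \<le> B k j" "0 < B j j"
    and ij: "i < n" "j < n"
    and B_col: "\<forall>k<n. k \<noteq> j \<longrightarrow> B k j \<le> \<delta> * B j j" and "0 \<le> \<delta>"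
  shows "mat_mult n P B i j / mat_mult n P B j j \<le> P i j / P j j + \<delta> * row_diag_ratio n P i j"
proof -
  let ?S = "\<Sum>k<n. P i k"
  have "(\<Sum>k\<in>{..<n}-{j}. P i k * B k j) \<le> (\<Sum>k\<in>{..<n}-{j}. P i k * (\<delta> * B j j))"
    using P ij B_col by (intro sum_mono mult_left_mono) auto
  also have "\<dots> \<le> (\<Sum>k<n. P i k * (\<delta> * B j j))"
    using P ij B \<open>0 \<le> \<delta>\<close> by (intro sum_mono2) auto
  also have "\<dots> = \<delta> * B j j * ?S"
    by (simp add: sum_distrib_left mult_ac)
  moreover have "mat_mult n P B i j = P i j * B j j + (\<Sum>k\<in>{..<n}-{j}. P i k * B k j)"
    unfolding mat_mult_def using \<open>j < n\<close> by (simp add: sum.remove)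
  ultimately have num: "mat_mult n P B i j \<le> B j j * (P i j + \<delta> * ?S)"
    by (simp add: algebra_simps)
  have den: "P j j * B j j \<le> mat_mult n P B j j"
    using mat_mult_diag_ge P B ij by blast
  have "mat_mult n P B i j / mat_mult n P B j j \<le> mat_mult n P B i j / (P j j * B j j)"
    using den P B ij mat_mult_nonneg[OF P(1) B(1) ij] mat_mult_diag_pos[OF P(1) B(1) _ P(2) B(2)]
    by (intro divide_left_mono) auto
  also have "\<dots> \<le> B j j * (P i j + \<delta> * ?S) / (P j j * B j j)"
    using num P B by (intro divide_right_mono) auto
  also have "\<dots> = P i j / P j j + \<delta> * row_diag_ratio n P i j"
    using P B by (simp add: row_diag_ratio_def field_simps)
  finally show ?thesis .
qed

lemma is_meps_mat_mult:
  assumes P: "is_meps n m e P" and B: "is_meps n m \<delta> B" and "0 < \<delta>" and "m \<le> n"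
    and small: "\<forall>i<n. \<forall>j<m. \<delta> * row_diag_ratio n P i j \<le> \<eta>"
  shows "is_meps n m (e + \<eta>) (mat_mult n P B)"
proof -
  have P_nonneg: "\<forall>i<n. \<forall>k<n. 0 \<le> P i k" and P_diag: "\<forall>j<n. 0 < P j j"
    using P by (auto simp: is_meps_def)
  have B_nonneg: "\<forall>k<n. \<forall>j<n. 0 \<le> B k j" and B_diag: "\<forall>j<n. 0 < B j j"
    using B by (auto simp: is_meps_def)
  have ratio: "mat_mult n P B i j / mat_mult n P B j j < e + \<eta>"
    if "j < m" "i < n" "i \<noteq> j" for i j
  proof -
    have "j < n" using that \<open>m \<le> n\<close> by simp
    have "\<forall>k<n. k \<noteq> j \<longrightarrow> B k j \<le> \<delta> * B j j"
      using B \<open>j < m\<close> \<open>j < n\<close> by (auto simp: is_meps_def divide_less_eq less_imp_le)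
    then have "mat_mult n P B i j / mat_mult n P B j j \<le> P i j / P j j + \<delta> * row_diag_ratio n P i j"
      using P_nonneg P_diag B_nonneg B_diag \<open>i < n\<close> \<open>j < n\<close> \<open>0 < \<delta>\<close>
      by (intro mat_mult_column_ratio_le) auto
    moreover have "P i j / P j j < e"
      using P that by (auto simp: is_meps_def)
    ultimately show ?thesis
      using small that by fastforce
  qed
  show ?thesis
    unfolding is_meps_def using mat_mult_nonneg[OF P_nonneg B_nonneg] mat_mult_diag_pos[OF P_nonneg B_nonneg] P_diag B_diag ratio
    by auto
qed

text \<open>The history before move \<open>s\<close> is \<open>h = [A\<^sub>0, \<dots>, A\<^sub>s\<^sub>-\<^sub>1]\<close>. The absolute
  values keep the bound nonnegative on histories that are not legal plays.\<close>

definition history_ratio_bound :: "nat \<Rightarrow> mat list \<Rightarrow> real" where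
  "history_ratio_bound n h =
     (\<Sum>(r, i, j) \<in> {..<length h} \<times> {..<n} \<times> {..<n}.
        \<bar>row_diag_ratio n (prodm n ((!) h) r (length h - 1)) i j\<bar>)"

definition alice_strategy :: "nat \<Rightarrow> mat list \<Rightarrow> real" where
  "alice_strategy n h = (1/2) ^ length h / (1 + history_ratio_bound n h)"

lemma history_ratio_bound_nonneg: "0 \<le> history_ratio_bound n h"
  unfolding history_ratio_bound_def by (intro sum_nonneg) auto

lemma alice_strategy_pos: "0 < alice_strategy n h"
  unfolding alice_strategy_def using history_ratio_bound_nonneg[of n h] by auto

lemma alice_strategy_le: "alice_strategy n h \<le> (1/2) ^ length h"
  unfolding alice_strategy_def using history_ratio_bound_nonneg[of n h]
  by (intro divide_left_mono[where b = 1, simplified]) auto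

lemma row_diag_ratio_le_history_ratio_bound:
  assumes "r \<le> s" "i < n" "j < n"
  shows "row_diag_ratio n (prodm n A r s) i j \<le> history_ratio_bound n (map A [0..<Suc s])"
proof -
  have "prodm n ((!) (map A [0..<Suc s])) r s = prodm n A r s" if "r \<le> s" for r
    using that by (intro prodm_cong) (auto simp del: upt_Suc)
  then have "history_ratio_bound n (map A [0..<Suc s]) =
      (\<Sum>(r, i, j) \<in> {..<Suc s} \<times> {..<n} \<times> {..<n}. \<bar>row_diag_ratio n (prodm n A r s) i j\<bar>)"
    unfolding history_ratio_bound_def by (intro sum.cong) auto
  also have "\<dots> \<ge> \<bar>row_diag_ratio n (prodm n A r s) i j\<bar>"
    using assms member_le_sum[of "(r, i, j)" "{..<Suc s} \<times> {..<n} \<times> {..<n}"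
        "\<lambda>(r, i, j). \<bar>row_diag_ratio n (prodm n A r s) i j\<bar>"] by auto
  finally show ?thesis by linarith
qed

lemma alice_strategy_mult_ratio_le:
  assumes "r \<le> s" "i < n" "j < n"
  shows "alice_strategy n (map A [0..<Suc s]) * row_diag_ratio n (prodm n A r s) i j
           \<le> (1/2) ^ Suc s"
proof -
  let ?M = "history_ratio_bound n (map A [0..<Suc s])"
  have "row_diag_ratio n (prodm n A r s) i j / (1 + ?M) \<le> 1"
    using row_diag_ratio_le_history_ratio_bound[OF assms, of A]
      history_ratio_bound_nonneg[of n "map A [0..<Suc s]"]
    by (simp add: divide_le_eq_1 del: upt_Suc)
  then have "(1/2) ^ Suc s * (row_diag_ratio n (prodm n A r s) i j / (1 + ?M)) \<le> (1/2) ^ Suc s"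
    by (rule mult_left_le) simp
  then show ?thesis
    unfolding alice_strategy_def by (simp add: ac_simps del: upt_Suc)
qed

lemma prodm_is_meps_alice_strategy:
  assumes play: "\<forall>s. is_meps n m (alice_strategy n (map A [0..<s])) (A s)" and "m \<le> n"
  shows "is_meps n m (2 * (1/2) ^ r - (1/2) ^ (r + d)) (prodm n A r (r + d))"
proof (induction d)
  case 0
  show ?case
    using play alice_strategy_le[of n "map A [0..<r]"] by (auto intro: is_meps_mono)
next
  case (Suc d)
  let ?s = "r + d"
  have "is_meps n m (2 * (1/2) ^ r - (1/2) ^ ?s + (1/2) ^ Suc ?s)
          (mat_mult n (prodm n A r ?s) (A (Suc ?s)))"
  proof (rule is_meps_mat_mult[OF Suc.IH])
    show "is_meps n m (alice_strategy n (map A [0..<Suc ?s])) (A (Suc ?s))"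
      using play by blast
  qed (use alice_strategy_pos alice_strategy_mult_ratio_le \<open>m \<le> n\<close> in auto)
  then show ?case by simp
qed

theorem theorem2p3:
  fixes n m :: nat
  assumes "2 \<le> n" and "1 \<le> m" and "m \<le> n"
  shows "\<exists>strat :: mat list \<Rightarrow> real.
           (\<forall>h. 0 < strat h) \<and>
           (\<forall>A :: nat \<Rightarrow> mat.
              (\<forall>s. is_meps n m (strat (map A [0..<s])) (A s)) \<longrightarrow> alice_wins n m A)"
proof (intro exI[of _ "alice_strategy n"] conjI allI impI)
  fix A :: "nat \<Rightarrow> mat"
  assume play: "\<forall>s. is_meps n m (alice_strategy n (map A [0..<s])) (A s)"
  have "is_meps n m (2 * (1/2) ^ r) (prodm n A r s)" if "r < s" for r s
  proof -
    obtain d where "s = r + d" using \<open>r < s\<close> less_imp_add_positive by blast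
    then show ?thesis
      using prodm_is_meps_alice_strategy[OF play \<open>m \<le> n\<close>, of r d]
      by (auto elim: is_meps_mono)
  qed
  moreover have "(\<lambda>r. 2 * (1/2::real) ^ r) \<longlonglongrightarrow> 0"
    by (intro tendsto_mult_right_zero LIMSEQ_power_zero) simp
  ultimately show "alice_wins n m A"
    unfolding alice_wins_def by (intro exI[of _ "\<lambda>r. 2 * (1/2) ^ r"]) auto
qed (rule alice_strategy_pos)

end
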